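(* Assume (A0), (A1), (A2'), (A3), and suppose $r(x,a,\mu)=r_0(x,\mu)$ does not depend on $a$, and $T(x,a,\mu,z,z^0)=T_0(x,a,z)$ depends neither on $\mu$ nor on the common noise. Let $\mu^*\in\mathbb P(S)$ be a maximizer of $\tilde r(\mu):=\int_S r_0(x,\mu)\mu(dx)$ over $\mathbb P(S)$. Suppose there exists a stochastic kernel $\bar Q^*$ from $S$ to $A$ with $\bar Q^*(D(x)|x)=1$ for all $x$ such that $\mu^*$ is a stationary distribution of $P^{\bar Q^*}$ and $P^{\bar Q^*}$ is Wasserstein ergodic. Then the stationary policy $\psi^*=(\varphi^*,\varphi^*,\dots)$ with $\varphi^*(\mu):=\mu\otimes\bar Q^*$ is average reward optimal in the limit MDP; indeed $G_{\psi^*}(\mu)=\tilde r(\mu^* )=G(\mu)$ for all $\mu\in\mathbb P(S)$.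
   Context: $S$ is a compact subset of $\mathbb R^k$ (metric $|x-y|$), $A$ a Borel set, $D(x)\subset A$, $D:=\{(x,a):x\in S,a\in D(x)\}$ containing the graph of a measurable map $S\to A$; $\mathbb P(S)$, $\mathbb P(D)$ have the weak topology. $Z$ is a random variable with law $\mathbb P^Z$ on a Borel set $\mathcal Z$; $r:S\times A\times\mathbb P(S)\to\mathbb R$ bounded. Without common noise and with $T=T_0$, the limit MDP has admissible actions $\tilde D(\mu):=\{Q\in\mathbb P(D):\text{first marginal }\mu\}$, reward $\int_Dr(x,a,\mu)Q(d(x,a))=\tilde r(\mu)$, and deterministic transition $\mu_{k+1}(B)=\int_S\int_A p^{x,a}(B)\bar Q_k(da|x)\mu_k(dx)$, where $p^{x,a}(B):=\mathbb P(T_0(x,a,Z)\in B)$ and $Q_k=\mu_k\otimes\bar Q_k$ is the chosen action ($\mu\otimes\bar Q$ denotes the measure $Q(B)=\int\int 1_B(x,a)\bar Q(da|x)\mu(dx)$). For a kernel $\bar Q$, $P^{\bar Q}(B|x):=\int p^{x,a}(B)\bar Q(da|x)$; $\mu^*$ is stationary if $\mu^*=\int P^{\bar Q^*}(\cdot|x)\mu^*(dx)$. Policies $\psi=(\varphi_n)$ are measurable $\varphi_n:\mathbb P(S)\to\mathbb P(D)$ with $\varphi_n(\mu)\in\tilde D(\mu)$; average reward $G_\psi(\mu):=\liminf_n\frac1n\sum_{k<n}\tilde r(\mu_k)$, $G:=\sup_\psi G_\psi$. Wasserstein distance: $W(\mu,\nu):=\sup\{|\int f\,d\nu-\int f\,d\mu|: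 f\text{ with }|f(x)-f(y)|\le|x-y|\}$. A kernel $P$ on $S$ is Wasserstein ergodic if there exist $\rho\in(0,1)$, $C>0$ with $\sup_{x\ne y}W(P^n(\cdot|x),P^n(\cdot|y))/|x-y|\le C\rho^n$ for all $n\in\mathbb N$. Assumptions: (A0) $D$ compact. (A1) If $x_n\to x$ and $a_n\in D(x_n)$, then $(a_n)$ has an accumulation point in $D(x)$. (A2') $r$ continuous in $(x,a,\mu)$. (A3) $T$ continuous in $(x,a,\mu)$ for fixed noise values. *)

theory Defs
  imports "HOL-Probability.Probability"
begin

definition PS :: "'x::euclidean_space set \<Rightarrow> 'x measure set" where
  "PS S = {\<mu>. prob_space \<mu> \<and> sets \<mu> = sets borel \<and> emeasure \<mu> S = 1}"

definition Dset :: "'x set \<Rightarrow> ('x \<Rightarrow> 'b set) \<Rightarrow> ('x \<times> 'b) set" where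
  "Dset S Dx = {(x, a). x \<in> S \<and> a \<in> Dx x}"

definition PD :: "('x::euclidean_space \<times> 'b::euclidean_space) set \<Rightarrow> ('x \<times> 'b) measure set" where
  "PD D = {Q. prob_space Q \<and> sets Q = sets borel \<and> emeasure Q D = 1}"

text \<open>Admissible actions of the limit MDP: elements of P(D) with first marginal mu.\<close>
definition Dtilde :: "'x::euclidean_space set \<Rightarrow> ('x \<Rightarrow> 'b::euclidean_space set) \<Rightarrow> 'x measure
    \<Rightarrow> ('x \<times> 'b) measure set" where
  "Dtilde S Dx \<mu> = {Q \<in> PD (Dset S Dx). distr Q borel fst = \<mu>}"

definition weak_conv_on :: "'x::euclidean_space set \<Rightarrow> (nat \<Rightarrow> 'x measure) \<Rightarrow> 'x measure \<Rightarrow> bool" where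
  "weak_conv_on S \<mu>s \<mu> \<longleftrightarrow>
     (\<forall>f. continuous_on S f \<longrightarrow>
        (\<lambda>n. (LINT x:S|\<mu>s n. f x)) \<longlonglongrightarrow> (LINT x:S|\<mu>. (f x :: real)))"

definition pZ :: "('x \<Rightarrow> 'b \<Rightarrow> 'z \<Rightarrow> 'x::euclidean_space) \<Rightarrow> 'z measure \<Rightarrow> 'x \<Rightarrow> 'b \<Rightarrow> 'x measure" where
  "pZ T0 PZ x a = distr PZ borel (T0 x a)"

definition trans_mu :: "'x::euclidean_space set \<Rightarrow> ('x \<Rightarrow> 'b::euclidean_space set)
    \<Rightarrow> ('x \<Rightarrow> 'b \<Rightarrow> 'z \<Rightarrow> 'x) \<Rightarrow> 'z measure \<Rightarrow> ('x \<times> 'b) measure \<Rightarrow> 'x measure" where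
  "trans_mu S Dx T0 PZ Q = measure_of UNIV (sets borel)
     (\<lambda>B. \<integral>\<^sup>+ y. indicator (Dset S Dx) y * emeasure (pZ T0 PZ (fst y) (snd y)) B \<partial>Q)"

definition rtilde :: "'x::euclidean_space set \<Rightarrow> ('x \<Rightarrow> 'x measure \<Rightarrow> real) \<Rightarrow> 'x measure \<Rightarrow> real" where
  "rtilde S r0 \<mu> = (LINT x:S|\<mu>. r0 x \<mu>)"

text \<open>The sigma-algebra on P(S) resp. P(D) is the one generated by
  the evaluations mu |-> mu(B) (Giry monad), i.e. the Borel sigma-algebra of the weak topology.\<close>
definition is_policy :: "'x::euclidean_space set \<Rightarrow> ('x \<Rightarrow> 'b::euclidean_space set)
    \<Rightarrow> (nat \<Rightarrow> 'x measure \<Rightarrow> ('x \<times> 'b) measure) \<Rightarrow> bool" where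
  "is_policy S Dx \<psi> \<longleftrightarrow>
     (\<forall>n. \<psi> n \<in> measurable (restrict_space (subprob_algebra borel) (PS S)) (subprob_algebra borel)
        \<and> (\<forall>\<mu>\<in>PS S. \<psi> n \<mu> \<in> Dtilde S Dx \<mu>))"

primrec traj :: "'x::euclidean_space set \<Rightarrow> ('x \<Rightarrow> 'b::euclidean_space set)
    \<Rightarrow> ('x \<Rightarrow> 'b \<Rightarrow> 'z \<Rightarrow> 'x) \<Rightarrow> 'z measure \<Rightarrow> (nat \<Rightarrow> 'x measure \<Rightarrow> ('x \<times> 'b) measure)
    \<Rightarrow> 'x measure \<Rightarrow> nat \<Rightarrow> 'x measure" where
  "traj S Dx T0 PZ \<psi> \<mu> 0 = \<mu>"
| "traj S Dx T0 PZ \<psi> \<mu> (Suc k) = trans_mu S Dx T0 PZ (\<psi> k (traj S Dx T0 PZ \<psi> \<mu> k))"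

definition avg_reward :: "'x::euclidean_space set \<Rightarrow> ('x \<Rightarrow> 'b::euclidean_space set)
    \<Rightarrow> ('x \<Rightarrow> 'b \<Rightarrow> 'z \<Rightarrow> 'x) \<Rightarrow> 'z measure \<Rightarrow> ('x \<Rightarrow> 'x measure \<Rightarrow> real)
    \<Rightarrow> (nat \<Rightarrow> 'x measure \<Rightarrow> ('x \<times> 'b) measure) \<Rightarrow> 'x measure \<Rightarrow> ereal" where
  "avg_reward S Dx T0 PZ r0 \<psi> \<mu> =
     liminf (\<lambda>n. ereal ((1 / real n) * (\<Sum>k<n. rtilde S r0 (traj S Dx T0 PZ \<psi> \<mu> k))))"

definition opt_avg_reward :: "'x::euclidean_space set \<Rightarrow> ('x \<Rightarrow> 'b::euclidean_space set)
    \<Rightarrow> ('x \<Rightarrow> 'b \<Rightarrow> 'z \<Rightarrow> 'x) \<Rightarrow> 'z measure \<Rightarrow> ('x \<Rightarrow> 'x measure \<Rightarrow> real)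
    \<Rightarrow> 'x measure \<Rightarrow> ereal" where
  "opt_avg_reward S Dx T0 PZ r0 \<mu> =
     (SUP \<psi>\<in>{\<psi>. is_policy S Dx \<psi>}. avg_reward S Dx T0 PZ r0 \<psi> \<mu>)"

definition mu_kernel :: "'x::euclidean_space set \<Rightarrow> 'x measure \<Rightarrow> ('x \<Rightarrow> 'b::euclidean_space measure)
    \<Rightarrow> ('x \<times> 'b) measure" where
  "mu_kernel S \<mu> Qb = measure_of UNIV (sets borel)
     (\<lambda>B. \<integral>\<^sup>+ x. indicator S x * emeasure (Qb x) (Pair x -` B) \<partial>\<mu>)"

definition Pker :: "('x \<Rightarrow> 'b::euclidean_space set) \<Rightarrow> ('x \<Rightarrow> 'b \<Rightarrow> 'z \<Rightarrow> 'x::euclidean_space)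
    \<Rightarrow> 'z measure \<Rightarrow> ('x \<Rightarrow> 'b measure) \<Rightarrow> 'x \<Rightarrow> 'x measure" where
  "Pker Dx T0 PZ Qb x = measure_of UNIV (sets borel)
     (\<lambda>B. \<integral>\<^sup>+ a. indicator (Dx x) a * emeasure (pZ T0 PZ x a) B \<partial>(Qb x))"

primrec kpow :: "'x::euclidean_space set \<Rightarrow> ('x \<Rightarrow> 'x measure) \<Rightarrow> nat \<Rightarrow> 'x \<Rightarrow> 'x measure" where
  "kpow S P 0 x = return borel x"
| "kpow S P (Suc n) x = measure_of UNIV (sets borel)
     (\<lambda>B. \<integral>\<^sup>+ y. indicator S y * emeasure (P y) B \<partial>(kpow S P n x))"

definition wasserstein :: "'x::euclidean_space set \<Rightarrow> 'x measure \<Rightarrow> 'x measure \<Rightarrow> real" where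
  "wasserstein S \<mu> \<nu> = Sup {\<bar>(LINT x:S|\<nu>. f x) - (LINT x:S|\<mu>. f x)\<bar> | f.
      \<forall>x\<in>S. \<forall>y\<in>S. \<bar>f x - f y\<bar> \<le> dist x y}"

definition wasserstein_ergodic :: "'x::euclidean_space set \<Rightarrow> ('x \<Rightarrow> 'x measure) \<Rightarrow> bool" where
  "wasserstein_ergodic S P \<longleftrightarrow>
     (\<exists>\<rho> C. 0 < \<rho> \<and> \<rho> < 1 \<and> 0 < C \<and>
        (\<forall>n\<ge>1. \<forall>x\<in>S. \<forall>y\<in>S. x \<noteq> y \<longrightarrow>
            wasserstein S (kpow S P n x) (kpow S P n y) / dist x y \<le> C * \<rho> ^ n))"

definition stationary :: "'x::euclidean_space set \<Rightarrow> ('x \<Rightarrow> 'x measure) \<Rightarrow> 'x measure \<Rightarrow> bool" where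
  "stationary S P \<mu> \<longleftrightarrow>
     (\<forall>B\<in>sets borel. emeasure \<mu> B = (\<integral>\<^sup>+ x. indicator S x * emeasure (P x) B \<partial>\<mu>))"

end

theory Submission
  imports Defs
begin

text \<open>Under the decision kernel [Q*] the limit MDP evolves by [\<mu>_n = \<mu> P^n] with [P = P^{Q*}].
  For an [L]-Lipschitz [h], stationarity and Wasserstein ergodicity give
  [|\<integral>h d\<mu>_n - \<integral>h d\<mu>*| \<le> 2 L C \<rho>^n diam S]; since Lipschitz functions are uniformly dense in
  the continuous functions on the compact [S], [\<mu>_n] converges weakly to [\<mu>*]. Joint continuity of
  [r0] makes [rtilde] weakly continuous, so [rtilde \<mu>_n \<rightarrow> rtilde \<mu>*] and the Cesaro averages
  converge to the maximal value [rtilde \<mu>*]. No policy can do better, since every trajectory stays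
  in [P(S)], where [rtilde \<le> rtilde \<mu>*].\<close>

lemma measure_of_borel_eqI:
  assumes "sets M = sets (borel :: 'a::topological_space measure)"
    and "\<And>B. B \<in> sets borel \<Longrightarrow> f B = emeasure M B"
  shows "measure_of UNIV (sets (borel :: 'a measure)) f = M"
proof -
  have "measure_of UNIV (sets (borel :: 'a measure)) f
      = measure_of UNIV (sets (borel :: 'a measure)) (emeasure M)"
    using assms(2) sets.sigma_sets_eq[of borel] by (intro measure_of_eq) auto
  also have "\<dots> = M"
    using measure_of_of_measure[of M] assms(1) sets_eq_imp_space_eq[OF assms(1)] by simp
  finally show ?thesis .
qed

lemma (in subprob_space) prob_space_of_emeasure_eq_1:
  assumes "emeasure M E = 1"
  shows "prob_space M"
proof -
  have "E \<in> sets M"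
    using assms emeasure_notin_sets by force
  then have "emeasure M E \<le> emeasure M (space M)"
    by (intro emeasure_mono) (auto dest: sets.sets_into_space)
  then have "emeasure M (space M) = 1"
    using assms emeasure_space_le_1 by (auto intro: antisym)
  then show ?thesis by (rule prob_spaceI)
qed

lemma (in prob_space) abs_integral_diff_const_le:
  fixes g :: "'a \<Rightarrow> real"
  assumes "g \<in> borel_measurable M" "AE x in M. \<bar>g x - c\<bar> \<le> B"
  shows "\<bar>(\<integral>x. g x \<partial>M) - c\<bar> \<le> B"
proof -
  have g: "integrable M g"
    using assms by (intro integrable_const_bound[where B="\<bar>c\<bar> + B"]) auto
  have "(\<integral>x. g x \<partial>M) - c = (\<integral>x. g x - c \<partial>M)"
    using g by (simp add: prob_space)
  also have "\<bar>\<dots>\<bar> \<le> (\<integral>x. \<bar>g x - c\<bar> \<partial>M)"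
    by (rule integral_abs_bound)
  also have "\<dots> \<le> (\<integral>x. B \<partial>M)"
    using g assms(2) by (intro integral_mono_AE) auto
  finally show ?thesis by (simp add: prob_space)
qed

lemma cesaro_mean_tendsto:
  fixes a :: "nat \<Rightarrow> real"
  assumes "a \<longlonglongrightarrow> l"
  shows "(\<lambda>n. (1 / real n) * (\<Sum>k<n. a k)) \<longlonglongrightarrow> l"
proof (rule LIMSEQ_I)
  fix r :: real assume r: "0 < r"
  obtain N where N: "\<And>k. k \<ge> N \<Longrightarrow> \<bar>a k - l\<bar> < r / 2"
    using LIMSEQ_D[OF assms, of "r / 2"] r by auto
  define B where "B = (\<Sum>k<N. \<bar>a k - l\<bar>)"
  obtain M :: nat where M: "real M > 2 * B / r"
    using reals_Archimedean2 by blast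
  show "\<exists>n0. \<forall>n\<ge>n0. norm ((1 / real n) * (\<Sum>k<n. a k) - l) < r"
  proof (intro exI[of _ "Suc (max N M)"] allI impI)
    fix n assume n: "Suc (max N M) \<le> n"
    then have n_pos: "real n > 0" and "N \<le> n" by auto
    have "(\<Sum>k<n. \<bar>a k - l\<bar>) = B + (\<Sum>k\<in>{N..<n}. \<bar>a k - l\<bar>)"
      unfolding B_def using \<open>N \<le> n\<close>
      by (simp add: atLeast0LessThan[symmetric] sum.atLeastLessThan_concat)
    also have "(\<Sum>k\<in>{N..<n}. \<bar>a k - l\<bar>) \<le> real (card {N..<n}) * (r / 2)"
      using N by (intro sum_bounded_above) (auto intro: less_imp_le)
    also have "\<dots> \<le> real n * (r / 2)"
      using r by (intro mult_right_mono) auto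
    finally have tail: "(\<Sum>k<n. \<bar>a k - l\<bar>) \<le> B + real n * (r / 2)"
      by simp
    have "B / real n < r / 2"
    proof -
      have "real n > 2 * B / r"
        using M n by (smt (verit) of_nat_le_iff max.cobounded2 Suc_le_eq less_imp_le_nat)
      then show ?thesis
        using r n_pos by (simp add: divide_less_eq mult.commute)
    qed
    have "\<bar>(1 / real n) * (\<Sum>k<n. a k) - l\<bar> = (1 / real n) * \<bar>\<Sum>k<n. a k - l\<bar>"
      using n_pos by (simp add: sum_subtractf field_simps abs_mult)
    also have "\<dots> \<le> (1 / real n) * (B + real n * (r / 2))"
      using n_pos order_trans[OF sum_abs tail] by (intro mult_left_mono) auto
    also have "\<dots> = B / real n + r / 2"
      using n_pos by (simp add: field_simps)
    finally show "norm ((1 / real n) * (\<Sum>k<n. a k) - l) < r"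
      unfolding real_norm_def using \<open>B / real n < r / 2\<close> by linarith
  qed
qed

lemma liminf_average_le:
  assumes "\<And>k. a k \<le> c"
  shows "liminf (\<lambda>n. ereal ((1 / real n) * (\<Sum>k<n. a k))) \<le> ereal c"
proof -
  let ?avg = "\<lambda>n. ereal ((1 / real n) * (\<Sum>k<n. a k))"
  have "?avg n \<le> ereal c" if "1 \<le> n" for n
  proof -
    have "(\<Sum>k<n. a k) \<le> real n * c"
      using sum_bounded_above[of "{..<n}" a c] assms by simp
    then show ?thesis
      using that by (simp add: divide_le_eq mult.commute)
  qed
  then have "limsup ?avg \<le> ereal c"
    by (intro Limsup_bounded) (auto simp: eventually_sequentially)
  then show ?thesis
    using Liminf_le_Limsup[of sequentially ?avg] by simp
qed

subsection \<open>Lipschitz approximation of continuous functions\<close>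

definition pasch_hausdorff_envelope :: "('a::metric_space \<Rightarrow> real) \<Rightarrow> 'a set \<Rightarrow> real \<Rightarrow> 'a \<Rightarrow> real"
  where "pasch_hausdorff_envelope f S k x = (INF y\<in>S. f y + k * dist x y)"

lemma pasch_hausdorff_envelope_le:
  assumes "\<forall>y\<in>S. c \<le> f y" "0 \<le> k" "z \<in> S"
  shows "pasch_hausdorff_envelope f S k x \<le> f z + k * dist x z"
  unfolding pasch_hausdorff_envelope_def
proof (rule cInf_lower)
  show "bdd_below ((\<lambda>y. f y + k * dist x y) ` S)"
    using assms(1,2) by (intro bdd_belowI2[of _ c]) (auto intro: add_increasing2)
qed (use assms(3) in auto)

lemma pasch_hausdorff_envelope_ge:
  assumes "S \<noteq> {}" "\<And>z. z \<in> S \<Longrightarrow> c \<le> f z + k * dist x z"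
  shows "c \<le> pasch_hausdorff_envelope f S k x"
  unfolding pasch_hausdorff_envelope_def using assms by (intro cInf_greatest) auto

lemma lipschitz_pasch_hausdorff_envelope:
  assumes "S \<noteq> {}" "\<forall>y\<in>S. c \<le> f y" "0 \<le> k"
  shows "k-lipschitz_on S (pasch_hausdorff_envelope f S k)"
proof -
  let ?h = "pasch_hausdorff_envelope f S k"
  have triangle: "?h x \<le> ?h y + k * dist x y" for x y
  proof -
    have "?h x - k * dist x y \<le> ?h y"
    proof (rule pasch_hausdorff_envelope_ge[OF assms(1)])
      fix z assume "z \<in> S"
      have "k * dist x z \<le> k * dist x y + k * dist y z"
        using mult_left_mono[OF dist_triangle[of x z y] assms(3)] by (simp add: distrib_left)
      then show "?h x - k * dist x y \<le> f z + k * dist y z"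
        using pasch_hausdorff_envelope_le[OF assms(2,3) \<open>z \<in> S\<close>, of x] by linarith
    qed
    then show ?thesis by simp
  qed
  show ?thesis
  proof (rule lipschitz_onI[OF _ assms(3)])
    fix x y
    show "dist (?h x) (?h y) \<le> k * dist x y"
      using triangle[of x y] triangle[of y x] by (simp add: dist_real_def dist_commute abs_le_iff)
  qed
qed

text \<open>For [k = 2 sup |f| / d], with [d] a modulus of uniform continuity for [\<epsilon>], points farther
  than [d] apart cannot lower the infimum below [f x - \<epsilon>].\<close>

lemma continuous_on_compact_lipschitz_approx:
  fixes f :: "'a::metric_space \<Rightarrow> real"
  assumes "compact S" "continuous_on S f" "\<epsilon> > 0"
  obtains h k where "0 < k" "k-lipschitz_on S h" "\<And>x. x \<in> S \<Longrightarrow> \<bar>f x - h x\<bar> \<le> \<epsilon>"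
proof (cases "S = {}")
  case False
  obtain M where M: "M > 0" "\<And>x. x \<in> S \<Longrightarrow> \<bar>f x\<bar> \<le> M"
    using compact_imp_bounded[OF compact_continuous_image[OF assms(2,1)]]
    by (auto simp: bounded_pos)
  obtain d where d: "d > 0" "\<And>x x'. x \<in> S \<Longrightarrow> x' \<in> S \<Longrightarrow> dist x' x < d \<Longrightarrow> dist (f x') (f x) < \<epsilon>"
    using compact_uniformly_continuous[OF assms(2,1)] assms(3)
    unfolding uniformly_continuous_on_def by metis
  define k where "k = 2 * M / d"
  have k: "k > 0" using M d by (simp add: k_def)
  have lower: "\<forall>y\<in>S. - M \<le> f y" using M by force
  let ?h = "pasch_hausdorff_envelope f S k"
  show ?thesis
  proof (rule that[OF k])
    show "k-lipschitz_on S ?h"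
      using lipschitz_pasch_hausdorff_envelope[OF False lower] k by simp
    fix x assume x: "x \<in> S"
    have "?h x \<le> f x"
      using pasch_hausdorff_envelope_le[OF lower _ x, of k x] k by simp
    moreover have "f x - \<epsilon> \<le> ?h x"
    proof (rule pasch_hausdorff_envelope_ge[OF False])
      fix z assume z: "z \<in> S"
      show "f x - \<epsilon> \<le> f z + k * dist x z"
      proof (cases "dist z x < d")
        case True
        then show ?thesis
          using d(2)[OF x z] k by (smt (verit) dist_real_def zero_le_dist mult_nonneg_nonneg)
      next
        case False
        then have "2 * M \<le> k * dist x z"
          using k d by (simp add: k_def dist_commute field_simps)
        then show ?thesis using M(2)[OF x] M(2)[OF z] assms(3) by linarith
      qed
    qed
    ultimately show "\<bar>f x - ?h x\<bar> \<le> \<epsilon>" by linarith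
  qed
next
  case True
  then show ?thesis by (intro that[of 1 f]) (auto simp: lipschitz_on_def)
qed

lemma PS_D:
  assumes "\<mu> \<in> PS S"
  shows "prob_space \<mu>" "sets \<mu> = sets borel" "space \<mu> = UNIV" "emeasure \<mu> S = 1"
    "S \<in> sets borel" "AE x in \<mu>. x \<in> S"
proof -
  show prob: "prob_space \<mu>" and sets: "sets \<mu> = sets borel" and S: "emeasure \<mu> S = 1"
    using assms unfolding PS_def by auto
  then show "space \<mu> = UNIV" using sets_eq_imp_space_eq[of \<mu> borel] by simp
  show "S \<in> sets borel"
    using S emeasure_notin_sets[of S \<mu>] sets by force
  then show "AE x in \<mu>. x \<in> S"
    using S sets prob_space.AE_prob_1[OF prob] by (simp add: measure_def)
qed

lemma PS_I:
  assumes "subprob_space M" "sets M = sets borel" "emeasure M S = 1"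
  shows "M \<in> PS S"
  using assms subprob_space.prob_space_of_emeasure_eq_1 unfolding PS_def by blast

lemma bind_in_PS:
  assumes M: "prob_space M" "sets M = sets borel"
    and N: "N \<in> borel \<rightarrow>\<^sub>M subprob_algebra borel"
    and NS: "AE y in M. emeasure (N y) S = 1"
  shows "bind M N \<in> PS S"
proof -
  interpret prob_space M by fact
  have N': "N \<in> M \<rightarrow>\<^sub>M subprob_algebra borel"
    using N by (simp add: measurable_cong_sets[OF M(2) refl])
  have space: "space M = UNIV" using sets_eq_imp_space_eq[OF M(2)] by simp
  have "emeasure (bind M N) S = (\<integral>\<^sup>+y. emeasure (N y) S \<partial>M)"
  proof (cases "S \<in> sets borel")
    case True
    then show ?thesis by (intro emeasure_bind[OF _ N']) (auto simp: space)
  next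
    case False
    then have "emeasure (N y) S = 0" for y
      using sets_kernel[OF N] by (simp add: emeasure_notin_sets)
    then have "AE y in M. False"
      using NS by simp
    then show ?thesis
      using emeasure_space_1 by (simp add: AE_False)
  qed
  also have "\<dots> = 1"
    using NS by (simp add: nn_integral_cong_AE[OF NS] emeasure_space_1)
  finally show ?thesis
    using sets_kernel[OF N'] subprob_space_bind[OF _ N'] prob_space_imp_subprob_space[OF M(1)]
    by (intro PS_I) (auto simp: space intro: sets_bind)
qed

lemma set_integrable_PS:
  fixes g :: "'x::euclidean_space \<Rightarrow> real"
  assumes "compact S" "\<nu> \<in> PS S" "continuous_on S g"
  shows "set_integrable \<nu> S g"
proof -
  note \<nu> = PS_D[OF assms(2)]
  interpret prob_space \<nu> by fact
  obtain B where B: "\<And>x. x \<in> S \<Longrightarrow> norm (g x) \<le> B"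
    using compact_imp_bounded[OF compact_continuous_image[OF assms(3,1)]]
    by (auto simp: bounded_iff)
  have "(\<lambda>x. indicator S x *\<^sub>R g x) \<in> borel_measurable \<nu>"
    using borel_measurable_continuous_on_indicator[OF \<nu>(5) assms(3)]
    by (simp add: measurable_cong_sets[OF \<nu>(2) refl])
  moreover have "AE x in \<nu>. norm (indicator S x *\<^sub>R g x) \<le> B"
    using \<nu>(6) by eventually_elim (use B in auto)
  ultimately show ?thesis
    unfolding set_integrable_def by (intro integrable_const_bound[where B=B])
qed

lemma abs_set_integral_diff_le_PS:
  fixes g1 g2 :: "'x::euclidean_space \<Rightarrow> real"
  assumes "compact S" "\<nu> \<in> PS S" "continuous_on S g1" "continuous_on S g2"
    and "\<And>x. x \<in> S \<Longrightarrow> \<bar>g1 x - g2 x\<bar> \<le> B"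
  shows "\<bar>(LINT x:S|\<nu>. g1 x) - (LINT x:S|\<nu>. g2 x)\<bar> \<le> B"
proof -
  note \<nu> = PS_D[OF assms(2)]
  have g1: "set_integrable \<nu> S g1" and g2: "set_integrable \<nu> S g2"
    using set_integrable_PS assms by blast+
  have "(LINT x:S|\<nu>. g1 x) - (LINT x:S|\<nu>. g2 x) = (\<integral>x. indicator S x *\<^sub>R (g1 x - g2 x) \<partial>\<nu>)"
    using set_integral_diff(2)[OF g1 g2] by (simp add: set_lebesgue_integral_def)
  also have "\<bar>\<dots> - 0\<bar> \<le> B"
  proof (rule prob_space.abs_integral_diff_const_le[OF \<nu>(1)])
    show "(\<lambda>x. indicator S x *\<^sub>R (g1 x - g2 x)) \<in> borel_measurable \<nu>"
      using Bochner_Integration.integrable_diff[OF g1[unfolded set_integrable_def] g2[unfolded set_integrable_def]]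
      by (simp add: right_diff_distrib borel_measurable_integrable)
    show "AE x in \<nu>. \<bar>indicator S x *\<^sub>R (g1 x - g2 x) - 0\<bar> \<le> B"
      using \<nu>(6) by eventually_elim (use assms(5) in auto)
  qed
  finally show ?thesis by simp
qed

lemma set_integral_const_PS:
  assumes "\<nu> \<in> PS S"
  shows "(LINT x:S|\<nu>. (c::real)) = c"
  using PS_D[OF assms] prob_space.emeasure_space_1
  by (simp add: set_integral_const measure_def)

lemma wasserstein_bdd_above:
  fixes S :: "'x::euclidean_space set"
  assumes "compact S" "\<nu>1 \<in> PS S" "\<nu>2 \<in> PS S"
  shows "bdd_above {\<bar>(LINT x:S|\<nu>2. f x) - (LINT x:S|\<nu>1. f x)\<bar> | f.
      \<forall>x\<in>S. \<forall>y\<in>S. \<bar>f x - f y\<bar> \<le> dist x y}"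
proof (rule bdd_aboveI, safe)
  fix f :: "'x \<Rightarrow> real" assume f: "\<forall>x\<in>S. \<forall>y\<in>S. \<bar>f x - f y\<bar> \<le> dist x y"
  obtain y0 where y0: "y0 \<in> S"
    using PS_D(4)[OF assms(2)] by fastforce
  have "continuous_on S f"
    using f by (intro lipschitz_on_continuous_on[of 1]) (auto simp: lipschitz_on_def dist_real_def)
  then have "\<bar>(LINT x:S|\<nu>. f x) - f y0\<bar> \<le> diameter S" if "\<nu> \<in> PS S" for \<nu>
    using abs_set_integral_diff_le_PS[OF assms(1) that, of f "\<lambda>_. f y0" "diameter S"]
      f y0 diameter_bounded_bound[OF compact_imp_bounded[OF assms(1)], of _ y0]
      set_integral_const_PS[OF that]
    by force
  from this[OF assms(2)] this[OF assms(3)]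
  show "\<bar>(LINT x:S|\<nu>2. f x) - (LINT x:S|\<nu>1. f x)\<bar> \<le> 2 * diameter S"
    by linarith
qed

lemma lipschitz_set_integral_diff_le_wasserstein:
  fixes S :: "'x::euclidean_space set"
  assumes "compact S" "\<nu>1 \<in> PS S" "\<nu>2 \<in> PS S" "L-lipschitz_on S f" "L > 0"
  shows "\<bar>(LINT x:S|\<nu>1. f x) - (LINT x:S|\<nu>2. f x)\<bar> \<le> L * wasserstein S \<nu>1 \<nu>2"
proof -
  have "\<bar>f x / L - f y / L\<bar> \<le> dist x y" if "x \<in> S" "y \<in> S" for x y
  proof -
    have "\<bar>f x - f y\<bar> / L \<le> dist x y"
      using lipschitz_onD[OF assms(4) that] assms(5) by (simp add: dist_real_def divide_le_eq mult.commute)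
    then show ?thesis
      using assms(5) by (simp add: diff_divide_distrib[symmetric])
  qed
  then have "\<bar>(LINT x:S|\<nu>2. f x / L) - (LINT x:S|\<nu>1. f x / L)\<bar>
      \<in> {\<bar>(LINT x:S|\<nu>2. g x) - (LINT x:S|\<nu>1. g x)\<bar> | g. \<forall>x\<in>S. \<forall>y\<in>S. \<bar>g x - g y\<bar> \<le> dist x y}"
    by (intro CollectI exI[of _ "\<lambda>x. f x / L"]) auto
  then have "\<bar>(LINT x:S|\<nu>2. f x / L) - (LINT x:S|\<nu>1. f x / L)\<bar> \<le> wasserstein S \<nu>1 \<nu>2"
    unfolding wasserstein_def by (rule cSup_upper[OF _ wasserstein_bdd_above[OF assms(1-3)]])
  then have "\<bar>(LINT x:S|\<nu>1. f x) - (LINT x:S|\<nu>2. f x)\<bar> / L \<le> wasserstein S \<nu>1 \<nu>2"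
    using assms(5) by (simp add: diff_divide_distrib[symmetric] abs_minus_commute)
  then show ?thesis
    using assms(5) by (simp add: divide_le_eq mult.commute)
qed

subsection \<open>Weak continuity of the reward\<close>

definition jointly_weakly_continuous :: "'x::euclidean_space set \<Rightarrow> ('x \<Rightarrow> 'x measure \<Rightarrow> real) \<Rightarrow> bool"
  where "jointly_weakly_continuous S r0 \<longleftrightarrow>
    (\<forall>xs x \<mu>s \<mu>. (\<forall>n. xs n \<in> S \<and> \<mu>s n \<in> PS S) \<and> x \<in> S \<and> \<mu> \<in> PS S
       \<and> xs \<longlonglongrightarrow> x \<and> weak_conv_on S \<mu>s \<mu> \<longrightarrow> (\<lambda>n. r0 (xs n) (\<mu>s n)) \<longlonglongrightarrow> r0 x \<mu>)"

lemma jointly_weakly_continuousD: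
  assumes "jointly_weakly_continuous S r0" "\<And>n. xs n \<in> S" "\<And>n. \<mu>s n \<in> PS S" "x \<in> S" "\<mu> \<in> PS S"
    "xs \<longlonglongrightarrow> x" "weak_conv_on S \<mu>s \<mu>"
  shows "(\<lambda>n. r0 (xs n) (\<mu>s n)) \<longlonglongrightarrow> r0 x \<mu>"
  using assms unfolding jointly_weakly_continuous_def by blast

lemma weak_conv_on_const: "weak_conv_on S (\<lambda>_. \<mu>) \<mu>"
  unfolding weak_conv_on_def by simp

lemma weak_conv_on_subseq:
  assumes "weak_conv_on S \<mu>s \<mu>" "strict_mono \<sigma>"
  shows "weak_conv_on S (\<mu>s \<circ> \<sigma>) \<mu>"
  unfolding weak_conv_on_def
proof (intro allI impI)
  fix f :: "_ \<Rightarrow> real" assume "continuous_on S f"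
  then have "(\<lambda>n. LINT x:S|\<mu>s n. f x) \<longlonglongrightarrow> (LINT x:S|\<mu>. f x)"
    using assms(1) unfolding weak_conv_on_def by blast
  from LIMSEQ_subseq_LIMSEQ[OF this assms(2)]
  show "(\<lambda>n. LINT x:S|(\<mu>s \<circ> \<sigma>) n. f x) \<longlonglongrightarrow> (LINT x:S|\<mu>. f x)"
    by (simp add: comp_def)
qed

lemma jointly_weakly_continuous_continuous_on:
  assumes "jointly_weakly_continuous S r0" "\<nu> \<in> PS S"
  shows "continuous_on S (\<lambda>x. r0 x \<nu>)"
proof (rule continuous_on_sequentiallyI)
  fix u a assume "\<forall>n. u n \<in> S" "a \<in> S" "u \<longlonglongrightarrow> a"
  then show "(\<lambda>n. r0 (u n) \<nu>) \<longlonglongrightarrow> r0 a \<nu>"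
    using jointly_weakly_continuousD[OF assms(1) _ _ _ assms(2) _ weak_conv_on_const, of u a] assms(2)
    by simp
qed

text \<open>The contradiction hypothesis yields points [x_k] with a fixed gap; a convergent
  subsequence of them contradicts joint continuity.\<close>

lemma jointly_weakly_continuous_uniform:
  assumes "compact S" "jointly_weakly_continuous S r0"
    and "\<And>n. \<mu>s n \<in> PS S" "\<mu> \<in> PS S" "weak_conv_on S \<mu>s \<mu>" "e > 0"
  shows "\<exists>N. \<forall>n\<ge>N. \<forall>x\<in>S. \<bar>r0 x (\<mu>s n) - r0 x \<mu>\<bar> < e"
proof (rule ccontr)
  let ?bad = "{n. \<exists>x\<in>S. e \<le> \<bar>r0 x (\<mu>s n) - r0 x \<mu>\<bar>}"
  assume "\<not> ?thesis"
  then have "infinite ?bad"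
    by (auto simp: infinite_nat_iff_unbounded_le not_less)
  then obtain \<sigma> :: "nat \<Rightarrow> nat" where \<sigma>: "strict_mono \<sigma>" "\<And>k. \<sigma> k \<in> ?bad"
    using infinite_enumerate by blast
  then obtain xs where xs: "\<And>k. xs k \<in> S" "\<And>k. e \<le> \<bar>r0 (xs k) (\<mu>s (\<sigma> k)) - r0 (xs k) \<mu>\<bar>"
    by simp metis
  obtain l \<tau> where l: "l \<in> S" "strict_mono \<tau>" "(xs \<circ> \<tau>) \<longlonglongrightarrow> l"
    using seq_compactE[OF compact_imp_seq_compact[OF assms(1)], of xs] xs(1) by blast
  have "weak_conv_on S (\<mu>s \<circ> (\<sigma> \<circ> \<tau>)) \<mu>"
    by (intro weak_conv_on_subseq assms(5) strict_mono_o \<sigma>(1) l(2))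
  then have "(\<lambda>k. r0 ((xs \<circ> \<tau>) k) ((\<mu>s \<circ> (\<sigma> \<circ> \<tau>)) k)) \<longlonglongrightarrow> r0 l \<mu>"
    using xs(1) assms(3) by (intro jointly_weakly_continuousD[OF assms(2) _ _ l(1) assms(4) l(3)]) (auto simp: comp_def)
  moreover have "(\<lambda>k. r0 ((xs \<circ> \<tau>) k) \<mu>) \<longlonglongrightarrow> r0 l \<mu>"
    using jointly_weakly_continuous_continuous_on[OF assms(2,4)] l(1,3) xs(1)
    unfolding continuous_on_sequentially comp_def by simp
  ultimately have "(\<lambda>k. r0 ((xs \<circ> \<tau>) k) ((\<mu>s \<circ> (\<sigma> \<circ> \<tau>)) k) - r0 ((xs \<circ> \<tau>) k) \<mu>) \<longlonglongrightarrow> 0"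
    using tendsto_diff by fastforce
  then obtain k where "\<bar>r0 ((xs \<circ> \<tau>) k) ((\<mu>s \<circ> (\<sigma> \<circ> \<tau>)) k) - r0 ((xs \<circ> \<tau>) k) \<mu>\<bar> < e"
    using LIMSEQ_D[OF _ assms(6)] by fastforce
  then show False using xs(2)[of "\<tau> k"] by simp
qed

lemma rtilde_weak_conv_tendsto:
  assumes "compact S" "jointly_weakly_continuous S r0"
    and "\<And>n. \<mu>s n \<in> PS S" "\<mu> \<in> PS S" "weak_conv_on S \<mu>s \<mu>"
  shows "(\<lambda>n. rtilde S r0 (\<mu>s n)) \<longlonglongrightarrow> rtilde S r0 \<mu>"
proof (rule LIMSEQ_I)
  fix r :: real assume r: "r > 0"
  have cont: "continuous_on S (\<lambda>x. r0 x \<nu>)" if "\<nu> \<in> PS S" for \<nu>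
    by (rule jointly_weakly_continuous_continuous_on[OF assms(2) that])
  obtain N1 where N1: "\<And>n x. n \<ge> N1 \<Longrightarrow> x \<in> S \<Longrightarrow> \<bar>r0 x (\<mu>s n) - r0 x \<mu>\<bar> < r / 2"
    using jointly_weakly_continuous_uniform[OF assms, of "r / 2"] r by auto
  have "(\<lambda>n. LINT x:S|\<mu>s n. r0 x \<mu>) \<longlonglongrightarrow> (LINT x:S|\<mu>. r0 x \<mu>)"
    using assms(5) cont[OF assms(4)] unfolding weak_conv_on_def by blast
  from LIMSEQ_D[OF this, of "r / 2"] r
  obtain N2 where N2: "\<And>n. n \<ge> N2 \<Longrightarrow> \<bar>(LINT x:S|\<mu>s n. r0 x \<mu>) - (LINT x:S|\<mu>. r0 x \<mu>)\<bar> < r / 2"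
    by auto
  show "\<exists>n0. \<forall>n\<ge>n0. norm (rtilde S r0 (\<mu>s n) - rtilde S r0 \<mu>) < r"
  proof (intro exI[of _ "max N1 N2"] allI impI)
    fix n assume n: "max N1 N2 \<le> n"
    have "\<bar>(LINT x:S|\<mu>s n. r0 x (\<mu>s n)) - (LINT x:S|\<mu>s n. r0 x \<mu>)\<bar> \<le> r / 2"
      using N1 n cont assms(3,4)
      by (intro abs_set_integral_diff_le_PS[OF assms(1,3)]) (auto intro: less_imp_le)
    then show "norm (rtilde S r0 (\<mu>s n) - rtilde S r0 \<mu>) < r"
      using N2[of n] n unfolding rtilde_def real_norm_def by linarith
  qed
qed

subsection \<open>The kernels of the limit MDP under the fixed decision kernel\<close>

locale limit_mdp_kernels =
  fixes S :: "'x::euclidean_space set"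
    and Dx :: "'x \<Rightarrow> 'b::euclidean_space set"
    and PZ :: "'z measure"
    and T0 :: "'x \<Rightarrow> 'b \<Rightarrow> 'z \<Rightarrow> 'x"
    and Qstar :: "'x \<Rightarrow> 'b measure"
  assumes S_compact: "compact S"
    and D_borel: "Dset S Dx \<in> sets borel"
    and PZ_prob: "prob_space PZ"
    and T0_meas: "(\<lambda>((x, a), z). T0 x a z) \<in> measurable (restrict_space borel (Dset S Dx) \<Otimes>\<^sub>M PZ) borel"
    and T0_range: "\<forall>(x, a)\<in>Dset S Dx. \<forall>z\<in>space PZ. T0 x a z \<in> S"
    and Qstar_kernel: "Qstar \<in> measurable (restrict_space borel S) (subprob_algebra borel)"
    and Qstar_prob: "\<forall>x\<in>S. prob_space (Qstar x) \<and> emeasure (Qstar x) (Dx x) = 1"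
begin

abbreviation "D \<equiv> Dset S Dx"
abbreviation "PK \<equiv> Pker Dx T0 PZ Qstar"
abbreviation "kp n \<equiv> kpow S PK n"
abbreviation "psistar \<equiv> (\<lambda>(n::nat) \<mu>. mu_kernel S \<mu> Qstar)"

text \<open>[Pker], [kpow], [trans_mu] and [mu_kernel] are given by [measure_of]; the Giry-monad
  kernels below agree with them and make composition associative ([bind_assoc]).\<close>

definition transition_kernel :: "'x \<times> 'b \<Rightarrow> 'x measure" where
  "transition_kernel y = (if y \<in> D then distr PZ borel (T0 (fst y) (snd y)) else null_measure borel)"

definition action_kernel :: "'x \<Rightarrow> ('x \<times> 'b) measure" where
  "action_kernel x = (if x \<in> S then distr (Qstar x) borel (Pair x) else null_measure borel)"

definition state_kernel :: "'x \<Rightarrow> 'x measure" where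
  "state_kernel x = bind (action_kernel x) transition_kernel"

lemma S_borel: "S \<in> sets borel"
  using S_compact by (simp add: compact_imp_closed)

lemma T0_measurable: "(\<lambda>(y, z). T0 (fst y) (snd y) z) \<in> restrict_space borel D \<Otimes>\<^sub>M PZ \<rightarrow>\<^sub>M borel"
  using T0_meas by (simp add: case_prod_beta')

lemma transition_kernel_measurable: "transition_kernel \<in> borel \<rightarrow>\<^sub>M subprob_algebra borel"
proof -
  have "(\<lambda>y. distr PZ borel (T0 (fst y) (snd y))) \<in> restrict_space borel D \<rightarrow>\<^sub>M subprob_algebra borel"
    using T0_measurable PZ_prob
    by (intro measurable_distr2[where M=PZ])
       (auto simp: space_subprob_algebra prob_space_imp_subprob_space)
  then show ?thesis
    unfolding transition_kernel_def using D_borel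
    by (subst measurable_If_restrict_space_iff) auto
qed

lemma sets_Qstar: "x \<in> S \<Longrightarrow> sets (Qstar x) = sets borel"
  using sets_kernel[OF Qstar_kernel] by (simp add: space_restrict_space)

lemma space_Qstar: "x \<in> S \<Longrightarrow> space (Qstar x) = UNIV"
  using sets_eq_imp_space_eq[OF sets_Qstar] by simp

lemma Pair_measurable_Qstar: "x \<in> S \<Longrightarrow> Pair x \<in> Qstar x \<rightarrow>\<^sub>M borel"
  by (simp add: measurable_cong_sets[OF sets_Qstar refl])

lemma action_kernel_measurable: "action_kernel \<in> borel \<rightarrow>\<^sub>M subprob_algebra borel"
proof -
  have "(\<lambda>p. p) \<in> restrict_space borel S \<Otimes>\<^sub>M (borel :: 'b measure) \<rightarrow>\<^sub>M (borel :: ('x \<times> 'b) measure)"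
    using measurable_Pair[OF measurable_compose[OF measurable_fst
          measurable_restrict_space1[OF measurable_ident_sets[OF refl]]] measurable_snd]
    by (simp add: borel_prod[symmetric])
  then have "(\<lambda>x. distr (Qstar x) borel (Pair x)) \<in> restrict_space borel S \<rightarrow>\<^sub>M subprob_algebra borel"
    using Qstar_kernel by (intro measurable_distr2[where M=borel]) (simp_all add: case_prod_beta')
  then show ?thesis
    unfolding action_kernel_def using S_borel
    by (subst measurable_If_restrict_space_iff) auto
qed

lemma state_kernel_measurable: "state_kernel \<in> borel \<rightarrow>\<^sub>M subprob_algebra borel"
  unfolding state_kernel_def
  by (rule measurable_bind2[OF action_kernel_measurable transition_kernel_measurable])

lemma transition_kernel_measurable_on:
  assumes "sets M = sets borel"
  shows "transition_kernel \<in> M \<rightarrow>\<^sub>M subprob_algebra borel"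
  using transition_kernel_measurable by (simp only: measurable_cong_sets[OF assms refl])

lemma action_kernel_measurable_on:
  assumes "sets M = sets borel"
  shows "action_kernel \<in> M \<rightarrow>\<^sub>M subprob_algebra borel"
  using action_kernel_measurable by (simp only: measurable_cong_sets[OF assms refl])

lemma state_kernel_measurable_on:
  assumes "sets M = sets borel"
  shows "state_kernel \<in> M \<rightarrow>\<^sub>M subprob_algebra borel"
  using state_kernel_measurable by (simp only: measurable_cong_sets[OF assms refl])

lemmas kernel_measurable_on =
  transition_kernel_measurable_on action_kernel_measurable_on state_kernel_measurable_on

lemma sets_kernels [simp]:
  "sets (transition_kernel y) = sets borel" "sets (action_kernel x) = sets borel"
  "sets (state_kernel x) = sets borel"
  using sets_kernel[OF transition_kernel_measurable] sets_kernel[OF action_kernel_measurable]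
    sets_kernel[OF state_kernel_measurable] by simp_all

lemma space_kernels [simp]:
  "space (transition_kernel y) = UNIV" "space (action_kernel x) = UNIV"
  "space (state_kernel x) = UNIV"
  using sets_eq_imp_space_eq[OF sets_kernels(1)] sets_eq_imp_space_eq[OF sets_kernels(2)]
    sets_eq_imp_space_eq[OF sets_kernels(3)] by simp_all

lemma sets_bind_borel:
  assumes "sets M = sets borel" "N \<in> M \<rightarrow>\<^sub>M subprob_algebra borel"
  shows "sets (bind M N) = sets borel"
  using assms sets_eq_imp_space_eq[OF assms(1)] by (intro sets_bind[OF sets_kernel[OF assms(2)]]) auto

lemma emeasure_transition_kernel:
  "B \<in> sets borel \<Longrightarrow> emeasure (transition_kernel y) B = indicator D y * emeasure (pZ T0 PZ (fst y) (snd y)) B"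
  by (auto simp: transition_kernel_def pZ_def)

lemma emeasure_transition_kernel_S: "y \<in> D \<Longrightarrow> emeasure (transition_kernel y) S = 1"
proof -
  assume y: "y \<in> D"
  interpret prob_space PZ by (rule PZ_prob)
  have "T0 (fst y) (snd y) \<in> PZ \<rightarrow>\<^sub>M borel"
    using measurable_Pair2[OF T0_measurable, of y] y by (simp add: space_restrict_space)
  moreover have "T0 (fst y) (snd y) -` S \<inter> space PZ = space PZ"
    using y T0_range by (cases y) auto
  ultimately show ?thesis
    using y S_borel by (simp add: transition_kernel_def emeasure_distr emeasure_space_1)
qed

lemma emeasure_action_kernel:
  "B \<in> sets borel \<Longrightarrow> emeasure (action_kernel x) B = indicator S x * emeasure (Qstar x) (Pair x -` B)"
  by (cases "x \<in> S") (simp_all add: action_kernel_def emeasure_distr Pair_measurable_Qstar space_Qstar)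

lemma nn_integral_action_kernel:
  assumes "x \<in> S" "f \<in> borel_measurable borel"
  shows "(\<integral>\<^sup>+y. f y \<partial>action_kernel x) = (\<integral>\<^sup>+a. f (x, a) \<partial>Qstar x)"
  using assms by (simp add: action_kernel_def nn_integral_distr[OF Pair_measurable_Qstar])

lemma emeasure_state_kernel:
  "B \<in> sets borel \<Longrightarrow> emeasure (state_kernel x) B = (\<integral>\<^sup>+y. emeasure (transition_kernel y) B \<partial>action_kernel x)"
  unfolding state_kernel_def by (rule emeasure_bind[OF _ transition_kernel_measurable_on]) auto

lemma Pker_eq_state_kernel: "x \<in> S \<Longrightarrow> PK x = state_kernel x"
  unfolding Pker_def
proof (rule measure_of_borel_eqI)
  fix B :: "'x set" assume B: "B \<in> sets borel" and x: "x \<in> S"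
  show "(\<integral>\<^sup>+a. indicator (Dx x) a * emeasure (pZ T0 PZ x a) B \<partial>Qstar x) = emeasure (state_kernel x) B"
    using x measurable_emeasure_kernel[OF transition_kernel_measurable B]
    by (simp add: emeasure_state_kernel[OF B] nn_integral_action_kernel emeasure_transition_kernel[OF B]
        Dset_def indicator_def)
qed simp

lemma emeasure_state_kernel_outside: "x \<notin> S \<Longrightarrow> emeasure (state_kernel x) B = 0"
  by (cases "B \<in> sets borel") (simp_all add: emeasure_state_kernel action_kernel_def emeasure_notin_sets)

lemma nn_integral_Pker_eq_state_kernel:
  "(\<integral>\<^sup>+y. indicator S y * emeasure (PK y) B \<partial>M) = (\<integral>\<^sup>+y. emeasure (state_kernel y) B \<partial>M)"
  by (intro nn_integral_cong) (auto simp: Pker_eq_state_kernel emeasure_state_kernel_outside indicator_def)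

lemma Dx_eq_vimage: "x \<in> S \<Longrightarrow> Dx x = Pair x -` D"
  by (auto simp: Dset_def)

lemma emeasure_action_kernel_D: "emeasure (action_kernel x) D = indicator S x"
  using D_borel Qstar_prob by (simp add: emeasure_action_kernel Dx_eq_vimage[symmetric] indicator_def)

lemma emeasure_state_kernel_S: "x \<in> S \<Longrightarrow> emeasure (state_kernel x) S = 1"
proof -
  assume x: "x \<in> S"
  have "subprob_space (action_kernel x)"
    by (rule subprob_space_kernel[OF action_kernel_measurable]) simp
  then interpret prob_space "action_kernel x"
    using emeasure_action_kernel_D[of x] x subprob_space.prob_space_of_emeasure_eq_1 by force
  have "AE y in action_kernel x. y \<in> D"
    using emeasure_action_kernel_D[of x] x D_borel by (intro AE_prob_1) (simp add: measure_def)
  then have "emeasure (state_kernel x) S = (\<integral>\<^sup>+y. 1 \<partial>action_kernel x)"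
    unfolding emeasure_state_kernel[OF S_borel]
    by (intro nn_integral_cong_AE) (auto elim!: eventually_mono simp: emeasure_transition_kernel_S)
  then show ?thesis
    using emeasure_space_1 space_kernels(2)[of x] by simp
qed

lemma sets_kpow [simp]: "sets (kp n x) = sets borel"
  by (cases n) (simp_all add: sets.sigma_sets_eq[of borel, simplified])

lemma kpow_Suc_bind: "kp (Suc n) x = bind (kp n x) state_kernel"
proof -
  have sets_kp: "sets (kp n x) = sets borel" by simp
  show ?thesis
    unfolding kpow.simps
  proof (rule measure_of_borel_eqI)
    show "sets (bind (kp n x) state_kernel) = sets borel"
      by (rule sets_bind_borel[OF sets_kp state_kernel_measurable_on[OF sets_kp]])
    fix B :: "'x set" assume "B \<in> sets borel"
    then show "(\<integral>\<^sup>+y. indicator S y * emeasure (PK y) B \<partial>kp n x) = emeasure (bind (kp n x) state_kernel) B"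
      using sets_kp sets_eq_imp_space_eq[OF sets_kp]
      by (simp add: nn_integral_Pker_eq_state_kernel emeasure_bind[OF _ state_kernel_measurable_on])
  qed
qed

lemma kpow_measurable: "kp n \<in> borel \<rightarrow>\<^sub>M subprob_algebra borel"
proof (induction n)
  case (Suc n)
  have "(\<lambda>x. bind (kp n x) state_kernel) \<in> borel \<rightarrow>\<^sub>M subprob_algebra borel"
    by (rule measurable_bind2[OF Suc state_kernel_measurable])
  then show ?case by (simp only: kpow_Suc_bind)
qed (simp add: return_measurable)

lemma kpow_measurable_on:
  assumes "sets M = sets borel"
  shows "kp n \<in> M \<rightarrow>\<^sub>M subprob_algebra borel"
  using kpow_measurable by (simp only: measurable_cong_sets[OF assms refl])

lemma kpow_in_PS: "x \<in> S \<Longrightarrow> kp n x \<in> PS S"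
proof (induction n)
  case (Suc n)
  note kp = PS_D[OF Suc.IH[OF Suc.prems]]
  show ?case
    unfolding kpow_Suc_bind using kp(1,2) state_kernel_measurable
    by (rule bind_in_PS) (use kp(6) in \<open>auto elim!: eventually_mono simp: emeasure_state_kernel_S\<close>)
qed (auto intro!: PS_I simp: subprob_space_return S_borel)

lemma bind_kpow_in_PS: "\<mu> \<in> PS S \<Longrightarrow> bind \<mu> (kp n) \<in> PS S"
  using PS_D[of \<mu> S] kpow_measurable PS_D(4)[OF kpow_in_PS]
  by (intro bind_in_PS) (auto elim!: eventually_mono)

lemma bind_kpow_stationary:
  assumes "\<mu> \<in> PS S" "stationary S PK \<mu>"
  shows "bind \<mu> (kp n) = \<mu>"
proof (induction n)
  case 0
  then show ?case using PS_D[OF assms(1)] by (simp add: bind_return'')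
next
  case (Suc n)
  note \<mu> = PS_D[OF assms(1)]
  have "bind \<mu> state_kernel = \<mu>"
  proof (rule measure_eqI)
    show "sets (bind \<mu> state_kernel) = sets \<mu>"
      using \<mu>(2) by (simp add: sets_bind_borel kernel_measurable_on)
    fix B assume "B \<in> sets (bind \<mu> state_kernel)"
    then show "emeasure (bind \<mu> state_kernel) B = emeasure \<mu> B"
      using assms(2) \<mu>(2,3) unfolding stationary_def
      by (simp add: sets_bind_borel kernel_measurable_on emeasure_bind[OF _ state_kernel_measurable_on]
          nn_integral_Pker_eq_state_kernel)
  qed
  then show ?case
    using Suc bind_assoc[OF kpow_measurable_on[OF \<mu>(2)] state_kernel_measurable, symmetric]
    by (simp add: kpow_Suc_bind[abs_def])
qed

lemma trans_mu_eq_bind: "sets Q = sets borel \<Longrightarrow> trans_mu S Dx T0 PZ Q = bind Q transition_kernel"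
  unfolding trans_mu_def
  by (rule measure_of_borel_eqI)
     (simp_all add: sets_bind_borel kernel_measurable_on emeasure_bind[OF _ transition_kernel_measurable_on]
       sets_eq_imp_space_eq emeasure_transition_kernel)

lemma mu_kernel_eq_bind: "sets \<mu> = sets borel \<Longrightarrow> mu_kernel S \<mu> Qstar = bind \<mu> action_kernel"
  unfolding mu_kernel_def
  by (rule measure_of_borel_eqI)
     (simp_all add: sets_bind_borel kernel_measurable_on emeasure_bind[OF _ action_kernel_measurable_on]
       sets_eq_imp_space_eq emeasure_action_kernel)

lemma traj_psistar: "sets \<mu> = sets borel \<Longrightarrow> traj S Dx T0 PZ psistar \<mu> n = bind \<mu> (kp n)"
proof (induction n)
  case 0
  then show ?case by (simp add: bind_return'')
next
  case (Suc n)
  let ?\<mu>n = "bind \<mu> (kp n)"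
  have sets_\<mu>n: "sets ?\<mu>n = sets borel"
    using Suc.prems by (simp add: sets_bind_borel kpow_measurable_on)
  have "traj S Dx T0 PZ psistar \<mu> (Suc n) = bind (bind ?\<mu>n action_kernel) transition_kernel"
    using Suc sets_\<mu>n
    by (simp add: mu_kernel_eq_bind trans_mu_eq_bind sets_bind_borel kernel_measurable_on)
  also have "\<dots> = bind ?\<mu>n state_kernel"
    unfolding state_kernel_def
    by (rule bind_assoc[OF action_kernel_measurable_on[OF sets_\<mu>n] transition_kernel_measurable])
  also have "\<dots> = bind \<mu> (kp (Suc n))"
    using bind_assoc[OF kpow_measurable_on[OF Suc.prems] state_kernel_measurable]
    by (simp add: kpow_Suc_bind[abs_def])
  finally show ?case .
qed

lemma traj_in_PS:
  assumes "is_policy S Dx \<psi>" "\<mu> \<in> PS S"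
  shows "traj S Dx T0 PZ \<psi> \<mu> n \<in> PS S"
proof (induction n)
  case (Suc n)
  let ?Q = "\<psi> n (traj S Dx T0 PZ \<psi> \<mu> n)"
  have "?Q \<in> PD D"
    using assms(1) Suc unfolding is_policy_def Dtilde_def by blast
  then have Q: "prob_space ?Q" "sets ?Q = sets borel" "emeasure ?Q D = 1"
    unfolding PD_def by auto
  then have "AE y in ?Q. y \<in> D"
    using D_borel by (intro prob_space.AE_prob_1) (simp_all add: measure_def)
  then show ?case
    using Q by (simp add: trans_mu_eq_bind bind_in_PS[OF _ _ transition_kernel_measurable]
        eventually_mono emeasure_transition_kernel_S)
qed (use assms in simp)

lemma emeasure_action_kernel_fst:
  assumes "B \<in> sets borel"
  shows "emeasure (action_kernel x) (fst -` B) = indicator S x * indicator B x"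
proof -
  have "fst \<in> (borel :: ('x \<times> 'b) measure) \<rightarrow>\<^sub>M borel"
    by (intro borel_measurable_continuous_onI continuous_intros)
  from measurable_sets[OF this assms] have fst_B: "fst -` B \<in> sets (borel :: ('x \<times> 'b) measure)"
    by simp
  have "(Pair x :: 'b \<Rightarrow> _) -` fst -` B = (if x \<in> B then UNIV else {})" by auto
  then show ?thesis
    using Qstar_prob prob_space.emeasure_space_1[of "Qstar x"] space_Qstar[of x]
    by (cases "x \<in> S") (auto simp: emeasure_action_kernel[OF fst_B] indicator_def)
qed

lemma distr_fst_bind_action_kernel:
  assumes "\<mu> \<in> PS S"
  shows "distr (bind \<mu> action_kernel) borel fst = \<mu>"
proof (rule measure_eqI)
  note \<mu> = PS_D[OF assms]
  let ?Q = "bind \<mu> action_kernel"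
  have sets_Q: "sets ?Q = sets borel"
    using \<mu>(2) by (simp add: sets_bind_borel kernel_measurable_on)
  fix B assume "B \<in> sets (distr ?Q borel fst)"
  then have B: "B \<in> sets borel" by simp
  have "fst \<in> (borel :: ('x \<times> 'b) measure) \<rightarrow>\<^sub>M borel"
    by (intro borel_measurable_continuous_onI continuous_intros)
  then have fst_measurable: "fst \<in> ?Q \<rightarrow>\<^sub>M borel"
    by (simp only: measurable_cong_sets[OF sets_Q refl])
  have "emeasure ?Q (fst -` B) = (\<integral>\<^sup>+x. indicator S x * indicator B x \<partial>\<mu>)"
    using measurable_sets[OF fst_measurable B] \<mu>(3) sets_Q sets_eq_imp_space_eq[OF sets_Q]
    by (simp add: emeasure_bind[OF _ action_kernel_measurable_on[OF \<mu>(2)]] emeasure_action_kernel_fst[OF B])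
  also have "\<dots> = (\<integral>\<^sup>+x. indicator B x \<partial>\<mu>)"
    using \<mu>(6) by (intro nn_integral_cong_AE) (auto elim!: eventually_mono simp: indicator_def)
  finally show "emeasure (distr ?Q borel fst) B = emeasure \<mu> B"
    using emeasure_distr[OF fst_measurable B] sets_eq_imp_space_eq[OF sets_Q] B \<mu>(2) by simp
qed (simp add: PS_D(2)[OF assms])

lemma psistar_in_Dtilde:
  assumes "\<mu> \<in> PS S"
  shows "mu_kernel S \<mu> Qstar \<in> Dtilde S Dx \<mu>"
proof -
  note \<mu> = PS_D[OF assms]
  let ?Q = "bind \<mu> action_kernel"
  have QD: "emeasure ?Q D = 1"
    using D_borel \<mu> by (simp add: emeasure_bind[OF _ action_kernel_measurable_on] emeasure_action_kernel_D)
  have "subprob_space ?Q"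
    using \<mu>(1) by (intro subprob_space_bind[OF _ action_kernel_measurable_on[OF \<mu>(2)]] prob_space_imp_subprob_space)
  then have "prob_space ?Q"
    using QD by (rule subprob_space.prob_space_of_emeasure_eq_1)
  then show ?thesis
    using QD \<mu>(2) mu_kernel_eq_bind[OF \<mu>(2)] distr_fst_bind_action_kernel[OF assms]
    unfolding Dtilde_def PD_def by (simp add: sets_bind_borel kernel_measurable_on)
qed

lemma psistar_is_policy: "is_policy S Dx psistar"
  unfolding is_policy_def
proof (intro allI conjI ballI psistar_in_Dtilde)
  have "(\<lambda>\<mu>. bind \<mu> action_kernel) \<in> subprob_algebra borel \<rightarrow>\<^sub>M subprob_algebra borel"
    by (rule measurable_bind2[OF measurable_ident_sets[OF refl] action_kernel_measurable])
  then show "psistar n \<in> restrict_space (subprob_algebra borel) (PS S) \<rightarrow>\<^sub>M subprob_algebra borel" for n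
  proof (subst measurable_cong)
    fix \<mu> assume "\<mu> \<in> space (restrict_space (subprob_algebra borel) (PS S))"
    then have "\<mu> \<in> PS S" by (simp add: space_restrict_space)
    then show "mu_kernel S \<mu> Qstar = bind \<mu> action_kernel"
      using PS_D(2) mu_kernel_eq_bind by blast
  qed (rule measurable_restrict_space1)
qed

lemma set_integral_bind_kpow:
  fixes f :: "'x \<Rightarrow> real"
  assumes "\<nu> \<in> PS S" "continuous_on S f"
  shows "(LINT x:S|bind \<nu> (kp n). f x) = (\<integral>x. (LINT z:S|kp n x. f z) \<partial>\<nu>)"
proof -
  note \<nu> = PS_D[OF assms(1)]
  interpret prob_space \<nu> by fact
  obtain B where B: "B > 0" "\<And>x. x \<in> S \<Longrightarrow> norm (f x) \<le> B"
    using compact_imp_bounded[OF compact_continuous_image[OF assms(2) S_compact]]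
    by (auto simp: bounded_pos)
  have "integral\<^sup>L (bind \<nu> (kp n)) (\<lambda>x. indicator S x *\<^sub>R f x)
      = (\<integral>x. integral\<^sup>L (kp n x) (\<lambda>x. indicator S x *\<^sub>R f x) \<partial>\<nu>)"
  proof (rule integral_bind[OF borel_measurable_continuous_on_indicator[OF S_borel assms(2)]
        _ kpow_measurable_on[OF \<nu>(2)]])
    show "\<bar>indicator S x *\<^sub>R f x\<bar> \<le> B" for x
      using B by (auto simp: indicator_def)
    show "AE x in \<nu>. emeasure (kp n x) (space (kp n x)) \<le> ennreal 1"
      using subprob_space.emeasure_space_le_1[OF subprob_space_kernel[OF kpow_measurable]] by auto
  qed (rule finite_measure_axioms)
  then show ?thesis unfolding set_lebesgue_integral_def .
qed

lemma set_integral_kpow_measurable: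
  fixes f :: "'x \<Rightarrow> real"
  assumes "continuous_on S f"
  shows "(\<lambda>x. (LINT z:S|kp n x. f z)) \<in> borel_measurable borel"
  unfolding set_lebesgue_integral_def
  by (rule measurable_compose[OF kpow_measurable integral_measurable_subprob_algebra
        [OF borel_measurable_continuous_on_indicator[OF S_borel assms]]])

end

subsection \<open>Convergence to the stationary distribution\<close>

locale ergodic_limit_mdp = limit_mdp_kernels S Dx PZ T0 Qstar
  for S :: "'x::euclidean_space set" and Dx :: "'x \<Rightarrow> 'b::euclidean_space set"
    and PZ :: "'z measure" and T0 and Qstar +
  fixes \<mu>s :: "'x measure" and \<rho> C :: real
  assumes mus_PS: "\<mu>s \<in> PS S"
    and mus_stationary: "stationary S (Pker Dx T0 PZ Qstar) \<mu>s"
    and rho_pos: "0 < \<rho>" and rho_lt1: "\<rho> < 1" and C_pos: "0 < C"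
    and wasserstein_kpow: "\<And>n x y. 1 \<le> n \<Longrightarrow> x \<in> S \<Longrightarrow> y \<in> S \<Longrightarrow> x \<noteq> y \<Longrightarrow>
      wasserstein S (kpow S (Pker Dx T0 PZ Qstar) n x) (kpow S (Pker Dx T0 PZ Qstar) n y) / dist x y
        \<le> C * \<rho> ^ n"
begin

lemma lipschitz_set_integral_kpow:
  assumes "1 \<le> n" "0 < L" "L-lipschitz_on S f" "x \<in> S" "y \<in> S"
  shows "\<bar>(LINT z:S|kp n x. f z) - (LINT z:S|kp n y. f z)\<bar> \<le> L * (C * \<rho> ^ n * dist x y)"
proof (cases "x = y")
  case False
  then have "wasserstein S (kp n x) (kp n y) \<le> C * \<rho> ^ n * dist x y"
    using wasserstein_kpow[OF assms(1,4,5)] by (simp add: divide_le_eq)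
  then show ?thesis
    using lipschitz_set_integral_diff_le_wasserstein[OF S_compact
        kpow_in_PS[OF assms(4), of n] kpow_in_PS[OF assms(5), of n] assms(3,2)]
      assms(2,4,5) by (smt (verit) mult_left_mono)
qed simp

text \<open>Both [bind \<mu> (kp n)] and [\<mu>s = bind \<mu>s (kp n)] are averages of [kp n x], whose
  integrals of [f] all lie within [L C \<rho>^n diam S] of the one at a fixed point of [S].\<close>

lemma lipschitz_set_integral_bind_kpow:
  assumes "\<mu> \<in> PS S" "1 \<le> n" "0 < L" "L-lipschitz_on S f"
  shows "\<bar>(LINT x:S|bind \<mu> (kp n). f x) - (LINT x:S|\<mu>s. f x)\<bar> \<le> 2 * (L * (C * \<rho> ^ n * diameter S))"
proof -
  obtain y0 where y0: "y0 \<in> S" using PS_D(4)[OF mus_PS] by fastforce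
  have f: "continuous_on S f" by (rule lipschitz_on_continuous_on[OF assms(4)])
  have "\<bar>(LINT x:S|bind \<nu> (kp n). f x) - (LINT z:S|kp n y0. f z)\<bar> \<le> L * (C * \<rho> ^ n * diameter S)"
    if \<nu>: "\<nu> \<in> PS S" for \<nu>
  proof -
    note \<nu>' = PS_D[OF \<nu>]
    have "(\<lambda>x. LINT z:S|kp n x. f z) \<in> borel_measurable \<nu>"
      using set_integral_kpow_measurable[OF f] by (simp only: measurable_cong_sets[OF \<nu>'(2) refl])
    moreover have "AE x in \<nu>. \<bar>(LINT z:S|kp n x. f z) - (LINT z:S|kp n y0. f z)\<bar> \<le> L * (C * \<rho> ^ n * diameter S)"
      using \<nu>'(6)
    proof eventually_elim
      case (elim x)
      then show ?case
        using lipschitz_set_integral_kpow[OF assms(2-4) elim y0]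
          diameter_bounded_bound[OF compact_imp_bounded[OF S_compact] elim y0] assms(3) C_pos rho_pos
        by (smt (verit) mult_left_mono zero_le_power mult_nonneg_nonneg)
    qed
    ultimately show ?thesis
      unfolding set_integral_bind_kpow[OF \<nu> f] by (rule prob_space.abs_integral_diff_const_le[OF \<nu>'(1)])
  qed
  from this[OF assms(1)] this[OF mus_PS] show ?thesis
    unfolding bind_kpow_stationary[OF mus_PS mus_stationary] by linarith
qed

lemma weak_conv_bind_kpow:
  assumes "\<mu> \<in> PS S"
  shows "weak_conv_on S (\<lambda>n. bind \<mu> (kp n)) \<mu>s"
  unfolding weak_conv_on_def
proof (intro allI impI LIMSEQ_I)
  fix f :: "'x \<Rightarrow> real" and r :: real
  assume f: "continuous_on S f" and r: "0 < r"
  obtain h L where h: "0 < L" "L-lipschitz_on S h" "\<And>x. x \<in> S \<Longrightarrow> \<bar>f x - h x\<bar> \<le> r / 4"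
    by (rule continuous_on_compact_lipschitz_approx[OF S_compact f, of "r / 4"]) (use r in auto)
  have "(\<lambda>n. 2 * (L * (C * \<rho> ^ n * diameter S))) \<longlonglongrightarrow> 2 * (L * (C * 0 * diameter S))"
    using rho_pos rho_lt1 by (intro tendsto_intros LIMSEQ_power_zero) auto
  then have "(\<lambda>n. 2 * (L * (C * \<rho> ^ n * diameter S))) \<longlonglongrightarrow> 0"
    by simp
  then obtain n0 where "\<forall>n\<ge>n0. norm (2 * (L * (C * \<rho> ^ n * diameter S)) - 0) < r / 4"
    using LIMSEQ_D[of _ 0 "r / 4"] r by (meson zero_less_divide_iff zero_less_numeral)
  then have n0: "\<And>n. n \<ge> n0 \<Longrightarrow> 2 * (L * (C * \<rho> ^ n * diameter S)) < r / 4"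
    by (metis abs_less_iff diff_zero real_norm_def)
  show "\<exists>n0. \<forall>n\<ge>n0. norm ((LINT x:S|bind \<mu> (kp n). f x) - (LINT x:S|\<mu>s. f x)) < r"
  proof (intro exI[of _ "max n0 1"] allI impI)
    fix n assume n: "max n0 1 \<le> n"
    have hc: "continuous_on S h" by (rule lipschitz_on_continuous_on[OF h(2)])
    have "\<bar>(LINT x:S|bind \<mu> (kp n). f x) - (LINT x:S|bind \<mu> (kp n). h x)\<bar> \<le> r / 4"
      by (rule abs_set_integral_diff_le_PS[OF S_compact bind_kpow_in_PS[OF assms] f hc h(3)])
    moreover have "\<bar>(LINT x:S|\<mu>s. f x) - (LINT x:S|\<mu>s. h x)\<bar> \<le> r / 4"
      by (rule abs_set_integral_diff_le_PS[OF S_compact mus_PS f hc h(3)])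
    moreover have "\<bar>(LINT x:S|bind \<mu> (kp n). h x) - (LINT x:S|\<mu>s. h x)\<bar> < r / 4"
      using lipschitz_set_integral_bind_kpow[OF assms _ h(1,2), of n] n0[of n] n by simp
    ultimately show "norm ((LINT x:S|bind \<mu> (kp n). f x) - (LINT x:S|\<mu>s. f x)) < r"
      unfolding real_norm_def by linarith
  qed
qed

lemma avg_reward_psistar:
  assumes "jointly_weakly_continuous S r0" "\<mu> \<in> PS S"
  shows "avg_reward S Dx T0 PZ r0 psistar \<mu> = ereal (rtilde S r0 \<mu>s)"
proof -
  have "(\<lambda>n. rtilde S r0 (traj S Dx T0 PZ psistar \<mu> n)) \<longlonglongrightarrow> rtilde S r0 \<mu>s"
    using rtilde_weak_conv_tendsto[OF S_compact assms(1) bind_kpow_in_PS[OF assms(2)] mus_PS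
        weak_conv_bind_kpow[OF assms(2)]]
    by (simp add: traj_psistar PS_D(2)[OF assms(2)])
  then show ?thesis
    unfolding avg_reward_def by (intro lim_imp_Liminf tendsto_ereal cesaro_mean_tendsto) auto
qed

end

theorem mainTheorem11:
  fixes S :: "'x::euclidean_space set"
    and A :: "'b::euclidean_space set"
    and Dx :: "'x \<Rightarrow> 'b set"
    and PZ :: "'z measure"
    and T0 :: "'x \<Rightarrow> 'b \<Rightarrow> 'z \<Rightarrow> 'x"
    and r0 :: "'x \<Rightarrow> 'x measure \<Rightarrow> real"
    and \<mu>star :: "'x measure"
    and Qstar :: "'x \<Rightarrow> 'b measure"
  assumes S_compact: "compact S"
    and A_borel: "A \<in> sets borel"
    and Dx_sub: "\<forall>x\<in>S. Dx x \<subseteq> A"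
    and D_graph: "\<exists>g. g \<in> measurable (restrict_space borel S) borel \<and> (\<forall>x\<in>S. g x \<in> Dx x)"
    and PZ_prob: "prob_space PZ"
    and T0_meas: "(\<lambda>((x, a), z). T0 x a z)
                    \<in> measurable (restrict_space borel (Dset S Dx) \<Otimes>\<^sub>M PZ) borel"
    and T0_range: "\<forall>(x, a)\<in>Dset S Dx. \<forall>z\<in>space PZ. T0 x a z \<in> S"
    and r0_bounded: "\<exists>B. \<forall>x\<in>S. \<forall>\<mu>\<in>PS S. \<bar>r0 x \<mu>\<bar> \<le> B"
    and A0: "compact (Dset S Dx)"
    and A1: "\<forall>xs x as. (\<forall>n. xs n \<in> S) \<and> x \<in> S \<and> xs \<longlonglongrightarrow> x \<and> (\<forall>n. as n \<in> Dx (xs n))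
               \<longrightarrow> (\<exists>a\<in>Dx x. \<exists>\<sigma>::nat\<Rightarrow>nat. strict_mono \<sigma> \<and> (as \<circ> \<sigma>) \<longlonglongrightarrow> a)"
    and A2': "\<forall>xs x \<mu>s \<mu>. (\<forall>n. xs n \<in> S \<and> \<mu>s n \<in> PS S) \<and> x \<in> S \<and> \<mu> \<in> PS S
               \<and> xs \<longlonglongrightarrow> x \<and> weak_conv_on S \<mu>s \<mu>
               \<longrightarrow> (\<lambda>n. r0 (xs n) (\<mu>s n)) \<longlonglongrightarrow> r0 x \<mu>"
    and A3: "\<forall>z\<in>space PZ. continuous_on (Dset S Dx) (\<lambda>(x, a). T0 x a z)"
    and maximizer: "\<mu>star \<in> PS S" "\<forall>\<mu>\<in>PS S. rtilde S r0 \<mu> \<le> rtilde S r0 \<mu>star"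
    and Qstar_kernel: "(\<lambda>x. Qstar x) \<in> measurable (restrict_space borel S) (subprob_algebra borel)"
    and Qstar_prob: "\<forall>x\<in>S. prob_space (Qstar x) \<and> emeasure (Qstar x) (Dx x) = 1"
    and stat: "stationary S (Pker Dx T0 PZ Qstar) \<mu>star"
    and ergodic: "wasserstein_ergodic S (Pker Dx T0 PZ Qstar)"
  shows "is_policy S Dx (\<lambda>n \<mu>. mu_kernel S \<mu> Qstar)
    \<and> (\<forall>\<mu>\<in>PS S.
         avg_reward S Dx T0 PZ r0 (\<lambda>n \<mu>. mu_kernel S \<mu> Qstar) \<mu> = ereal (rtilde S r0 \<mu>star)
       \<and> opt_avg_reward S Dx T0 PZ r0 \<mu> = ereal (rtilde S r0 \<mu>star))"
proof -
  obtain \<rho> C where "0 < \<rho>" "\<rho> < 1" "0 < C"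
    "\<forall>n\<ge>1. \<forall>x\<in>S. \<forall>y\<in>S. x \<noteq> y \<longrightarrow> wasserstein S (kpow S (Pker Dx T0 PZ Qstar) n x)
       (kpow S (Pker Dx T0 PZ Qstar) n y) / dist x y \<le> C * \<rho> ^ n"
    using ergodic unfolding wasserstein_ergodic_def by blast
  then interpret ergodic_limit_mdp S Dx PZ T0 Qstar \<mu>star \<rho> C
    by (intro ergodic_limit_mdp.intro limit_mdp_kernels.intro ergodic_limit_mdp_axioms.intro
        S_compact borel_closed[OF compact_imp_closed[OF A0]] PZ_prob T0_meas T0_range Qstar_kernel
        Qstar_prob maximizer(1) stat) auto
  have avg: "avg_reward S Dx T0 PZ r0 psistar \<mu> = ereal (rtilde S r0 \<mu>star)" if "\<mu> \<in> PS S" for \<mu>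
    using avg_reward_psistar A2' that unfolding jointly_weakly_continuous_def by blast
  have "avg_reward S Dx T0 PZ r0 \<psi> \<mu> \<le> ereal (rtilde S r0 \<mu>star)"
    if "is_policy S Dx \<psi>" "\<mu> \<in> PS S" for \<psi> \<mu>
    unfolding avg_reward_def using maximizer(2) traj_in_PS[OF that] by (intro liminf_average_le) blast
  then have "opt_avg_reward S Dx T0 PZ r0 \<mu> = ereal (rtilde S r0 \<mu>star)" if "\<mu> \<in> PS S" for \<mu>
    unfolding opt_avg_reward_def using avg[OF that] that psistar_is_policy
    by (intro antisym SUP_least) (auto intro: SUP_upper2[of psistar])
  then show ?thesis
    using psistar_is_policy avg by blast
qed

end
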